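(* Let $f:\mathbb{R}^\ell\times\mathbb{R}^m\to\mathbb{R}^\ell$ be $C^1$, let $\Lambda$ be a parameter shift with limits $\lambda_\pm$, and let $X$ define a stable path with endpoints $X_\pm$. Fix $r>0$ and let $\{x_n^r\}_{n\in\mathbb{Z}}$ be the unique solution of $x_{n+1}=f(x_n,\Lambda(rn))$ with $\lim_{n\to-\infty}x_n^r=X_-$. Then there exists an open set $U\subset\mathbb{R}^\ell$ containing $X_-$ such that for all $y\in U$ and all $n_1\in\mathbb{Z}$, $$\lim_{n_0\to-\infty}\|\phi(n_1,n_0,y)-x_{n_1}^r\|=0.$$
   Context: A parameter shift is a $C^1$ function $\Lambda:\mathbb{R}\to\mathbb{R}^m$ with $\lim_{s\to\pm\infty}\Lambda(s)=\lambda_\pm$ and $\lim_{s\to\pm\infty}\Lambda'(s)=0$. A stable path is given by $X:\mathbb{R}\to\mathbb{R}^\ell$ such that: $X(s)$ is a fixed point of $f(\cdot,\Lambda(s))$ for every $s$; $\{(s,X(s))\}$ is a connected curve; the limits $X_\pm=\lim_{s\to\pm\infty}X(s)$ exist and are fixed points of $f(\cdot,\lambda_\pm)$; and the spectral radius of $D_xf(X(s),\Lambda(s))$ is $<1$ for all $s\in\mathbb{R}\cup\{\pm\infty\}$ (with $X(\pm\infty)=X_\pm$, $\Lambda(\pm\infty)=\lambda_\pm$). (It is known that a unique solution $\{x^r_n\}$ with $x^r_n\to X_-$ as $n\to-\infty$ exists.) For integers $n_0\le n_1$ and $y\in\mathbb{R}^\ell$, $\phi(n_1,n_0,y)$ denotes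 $y_{n_1}$, where $\{y_n\}_{n\ge n_0}$ is the forward orbit of $y_{n+1}=f(y_n,\Lambda(rn))$ with $y_{n_0}=y$. *)

theory Defs
  imports "HOL-Analysis.Analysis"
begin

definition mat_eigenvalues :: "real^'n^'n \<Rightarrow> complex set" where
  "mat_eigenvalues A = {z. det ((\<chi> i j. complex_of_real (A $ i $ j)) - (\<chi> i j. if i = j then z else 0)) = 0}"

definition mat_spectral_radius :: "real^'n^'n \<Rightarrow> real" where
  "mat_spectral_radius A = Sup (cmod ` mat_eigenvalues A)"

definition C1_with :: "('a::real_normed_vector \<Rightarrow> 'b::real_normed_vector) \<Rightarrow> ('a \<Rightarrow> 'a \<Rightarrow>\<^sub>L 'b) \<Rightarrow> bool" where
  "C1_with g Dg \<longleftrightarrow> (\<forall>z. (g has_derivative blinfun_apply (Dg z)) (at z)) \<and> continuous_on UNIV Dg"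

definition Dx_mat :: "((real^'l) \<times> (real^'m) \<Rightarrow> ((real^'l) \<times> (real^'m)) \<Rightarrow>\<^sub>L (real^'l)) \<Rightarrow> real^'l \<Rightarrow> real^'m \<Rightarrow> real^'l^'l" where
  "Dx_mat Df x p = matrix (\<lambda>v. blinfun_apply (Df (x, p)) (v, 0))"

definition parameter_shift :: "(real \<Rightarrow> real^'m) \<Rightarrow> real^'m \<Rightarrow> real^'m \<Rightarrow> bool" where
  "parameter_shift \<Lambda> lm lp \<longleftrightarrow>
     (\<exists>\<Lambda>'. (\<forall>s. (\<Lambda> has_vector_derivative \<Lambda>' s) (at s)) \<and> continuous_on UNIV \<Lambda>' \<and>
            (\<Lambda>' \<longlongrightarrow> 0) at_top \<and> (\<Lambda>' \<longlongrightarrow> 0) at_bot) \<and>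
     (\<Lambda> \<longlongrightarrow> lp) at_top \<and> (\<Lambda> \<longlongrightarrow> lm) at_bot"

definition stable_path ::
  "(real^'l \<Rightarrow> real^'m \<Rightarrow> real^'l) \<Rightarrow> ((real^'l) \<times> (real^'m) \<Rightarrow> ((real^'l) \<times> (real^'m)) \<Rightarrow>\<^sub>L (real^'l))
   \<Rightarrow> (real \<Rightarrow> real^'m) \<Rightarrow> real^'m \<Rightarrow> real^'m \<Rightarrow> (real \<Rightarrow> real^'l) \<Rightarrow> real^'l \<Rightarrow> real^'l \<Rightarrow> bool" where
  "stable_path f Df \<Lambda> lm lp X Xm Xp \<longleftrightarrow>
     (\<forall>s. f (X s) (\<Lambda> s) = X s) \<and>
     connected ((\<lambda>s. (s, X s)) ` UNIV) \<and>
     (X \<longlongrightarrow> Xp) at_top \<and> (X \<longlongrightarrow> Xm) at_bot \<and>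
     f Xp lp = Xp \<and> f Xm lm = Xm \<and>
     (\<forall>s. mat_spectral_radius (Dx_mat Df (X s) (\<Lambda> s)) < 1) \<and>
     mat_spectral_radius (Dx_mat Df Xp lp) < 1 \<and>
     mat_spectral_radius (Dx_mat Df Xm lm) < 1"

text \<open>Forward orbit: orbit ... n0 y k = y_{n0+k}, with y_{n+1} = f(y_n, \<Lambda>(r n)).\<close>
fun orbit :: "('a \<Rightarrow> 'p \<Rightarrow> 'a) \<Rightarrow> (real \<Rightarrow> 'p) \<Rightarrow> real \<Rightarrow> int \<Rightarrow> 'a \<Rightarrow> nat \<Rightarrow> 'a" where
  "orbit f \<Lambda> r n0 y 0 = y"
| "orbit f \<Lambda> r n0 y (Suc k) = f (orbit f \<Lambda> r n0 y k) (\<Lambda> (r * real_of_int (n0 + int k)))"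

text \<open>phi(n1,n0,y) = y_{n1}; meaningful for n0 \<le> n1.\<close>
definition phi :: "('a \<Rightarrow> 'p \<Rightarrow> 'a) \<Rightarrow> (real \<Rightarrow> 'p) \<Rightarrow> real \<Rightarrow> int \<Rightarrow> int \<Rightarrow> 'a \<Rightarrow> 'a" where
  "phi f \<Lambda> r n1 n0 y = orbit f \<Lambda> r n0 y (nat (n1 - n0))"

end

theory Submission
  imports Defs "Jordan_Normal_Form.Spectral_Radius"
begin

text \<open>
  The linearisation \<open>L = D\<^sub>xf(X\<^sub>-, \<lambda>\<^sub>-)\<close> has spectral radius below 1, so by the Jordan
  normal form some power \<open>L\<^sup>N\<close> contracts by a factor 1/4. Far in the past the solution
  \<open>x\<^sub>n\<close> stays near \<open>X\<^sub>-\<close> and \<open>\<Lambda>(rn)\<close> near \<open>\<lambda>\<^sub>-\<close>, where \<open>f\<close> is uniformly close to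
  its linearisation; hence the difference \<open>e\<^sub>j\<close> between \<open>x\<close> and an orbit started near \<open>X\<^sub>-\<close>
  satisfies \<open>e\<^sub>j\<^sub>+\<^sub>1 \<approx> L e\<^sub>j\<close> with a small relative error and is halved over every block of
  \<open>N\<close> steps. So at each fixed time \<open>T\<close> far enough in the past the orbit converges to \<open>x\<^sub>T\<close> as
  \<open>n\<^sub>0 \<rightarrow> -\<infinity>\<close>, and continuity of the finitely many maps from \<open>T\<close> to \<open>n\<^sub>1\<close> transports this
  convergence to every \<open>n\<^sub>1\<close>.
\<close>

no_notation vec_index (infixl "$" 100)
hide_const (open) Determinant.det

section \<open>Spectral radius and powers of a real matrix\<close>

definition cart_index :: "nat \<Rightarrow> 'n::finite" where
  "cart_index = (SOME h. bij_betw h {0..<CARD('n)} UNIV)"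

lemma bij_betw_cart_index: "bij_betw cart_index {0..<CARD('n)} (UNIV :: 'n::finite set)"
proof -
  obtain h :: "nat \<Rightarrow> 'n" where "bij_betw h {0..<CARD('n)} UNIV"
    using ex_bij_betw_nat_finite[of "UNIV :: 'n set"] by auto
  then show ?thesis unfolding cart_index_def by (metis someI_ex)
qed

lemma cart_index_eq_iff:
  "i < CARD('n) \<Longrightarrow> j < CARD('n) \<Longrightarrow> (cart_index i = (cart_index j :: 'n::finite)) \<longleftrightarrow> i = j"
  using bij_betw_cart_index[where 'n='n] by (auto simp: bij_betw_def dest: inj_onD)

lemma cart_index_surj: "\<exists>i<CARD('n). cart_index i = (a :: 'n::finite)"
proof -
  have "a \<in> cart_index ` {0..<CARD('n)}"
    using bij_betw_cart_index[where 'n='n] by (simp add: bij_betw_def)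
  then show ?thesis by auto
qed

lemma sum_cart_index:
  "(\<Sum>i<CARD('n). g (cart_index i :: 'n::finite)) = (\<Sum>a\<in>UNIV. g a)"
  using sum.reindex_bij_betw[OF bij_betw_cart_index, of g] by (simp add: atLeast0LessThan)

definition vec_of_cart :: "'a^'n \<Rightarrow> 'a vec" where
  "vec_of_cart v = Matrix.vec CARD('n) (\<lambda>i. v $ cart_index i)"

definition mat_of_cart :: "'a^'n^'n \<Rightarrow> 'a mat" where
  "mat_of_cart A = Matrix.mat CARD('n) CARD('n) (\<lambda>(i, j). A $ cart_index i $ cart_index j)"

lemma mat_of_cart_carrier [simp]: "mat_of_cart (A :: 'a^'n^'n) \<in> carrier_mat CARD('n) CARD('n)"
  by (simp add: mat_of_cart_def)

lemma dim_mat_of_cart: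
  "dim_row (mat_of_cart (A :: 'a^'n^'n)) = CARD('n)" "dim_col (mat_of_cart A) = CARD('n)"
  by (simp_all add: mat_of_cart_def)

lemma vec_of_cart_carrier [simp]: "vec_of_cart (v :: 'a^'n) \<in> carrier_vec CARD('n)"
  by (simp add: vec_of_cart_def)

lemma inj_vec_of_cart: "inj vec_of_cart"
proof (rule injI)
  fix v w :: "'a^'n"
  assume eq: "vec_of_cart v = vec_of_cart w"
  show "v = w"
  proof (rule Finite_Cartesian_Product.vec_eq_iff[THEN iffD2], rule allI)
    fix a :: 'n
    obtain i where i: "i < CARD('n)" "cart_index i = a"
      using cart_index_surj by blast
    have "vec_index (vec_of_cart v) i = vec_index (vec_of_cart w) i"
      using eq by simp
    then show "v $ a = w $ a" using i by (simp add: vec_of_cart_def)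
  qed
qed

lemma vec_of_cart_surj:
  assumes "w \<in> carrier_vec CARD('n)"
  shows "\<exists>v :: 'a^'n. vec_of_cart v = w"
proof
  let ?pos = "the_inv_into {0..<CARD('n)} (cart_index :: nat \<Rightarrow> 'n)"
  have "?pos (cart_index i) = i" if "i < CARD('n)" for i
    using the_inv_into_f_f[OF bij_betw_imp_inj_on[OF bij_betw_cart_index]] that by simp
  then show "vec_of_cart (\<chi> a. vec_index w (?pos a)) = w"
    using assms by (auto simp: vec_of_cart_def)
qed

lemma vec_of_cart_zero [simp]: "vec_of_cart (0 :: 'a::zero^'n) = 0\<^sub>v CARD('n)"
  by (auto simp: vec_of_cart_def)

lemma vec_of_cart_scalar_mult: "vec_of_cart (c *s v) = c \<cdot>\<^sub>v vec_of_cart (v :: 'a::times^'n)"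
  by (auto simp: vec_of_cart_def)

lemma mat_of_cart_mult_vec:
  "mat_of_cart A *\<^sub>v vec_of_cart v = vec_of_cart (A *v (v :: 'a::comm_semiring_1^'n))"
  by (auto simp: mat_of_cart_def vec_of_cart_def scalar_prod_def matrix_vector_mult_def
      atLeast0LessThan sum_cart_index[of "\<lambda>a. _ $ a * v $ a"])

lemma mat_of_cart_mult:
  "mat_of_cart (A ** B) = mat_of_cart A * mat_of_cart (B :: 'a::comm_semiring_1^'n^'n)"
  by (auto simp: mat_of_cart_def scalar_prod_def matrix_matrix_mult_def atLeast0LessThan
      sum_cart_index[of "\<lambda>a. _ $ a * B $ a $ _"] intro!: eq_matI)

lemma mat_of_cart_one:
  "mat_of_cart (Finite_Cartesian_Product.mat 1 :: 'a::{zero,one}^'n^'n) = 1\<^sub>m CARD('n)"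
  by (auto simp: mat_of_cart_def Finite_Cartesian_Product.mat_def cart_index_eq_iff intro!: eq_matI)

lemma eigenvalue_mat_of_cart_iff:
  "eigenvalue (mat_of_cart C) z \<longleftrightarrow> (\<exists>v. v \<noteq> 0 \<and> C *v v = z *s (v :: 'a::comm_ring_1^'n))"
proof -
  have eq: "C *v v = z *s v \<longleftrightarrow> mat_of_cart C *\<^sub>v vec_of_cart v = z \<cdot>\<^sub>v vec_of_cart v" for v
    unfolding mat_of_cart_mult_vec vec_of_cart_scalar_mult[symmetric]
    by (rule inj_eq[OF inj_vec_of_cart, symmetric])
  have nz: "v \<noteq> 0 \<longleftrightarrow> vec_of_cart v \<noteq> 0\<^sub>v CARD('n)" for v :: "'a^'n"
    using inj_vec_of_cart by (metis vec_of_cart_zero inj_eq)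
  show ?thesis
  proof
    assume "eigenvalue (mat_of_cart C) z"
    then obtain w where w: "w \<in> carrier_vec CARD('n)" "w \<noteq> 0\<^sub>v CARD('n)"
      "mat_of_cart C *\<^sub>v w = z \<cdot>\<^sub>v w"
      unfolding eigenvalue_def eigenvector_def dim_mat_of_cart by blast
    moreover obtain v :: "'a^'n" where "vec_of_cart v = w"
      using vec_of_cart_surj[OF w(1)] by blast
    ultimately show "\<exists>v. v \<noteq> 0 \<and> C *v v = z *s v" using eq nz by blast
  next
    assume "\<exists>v. v \<noteq> 0 \<and> C *v v = z *s v"
    then obtain v where "v \<noteq> 0" "C *v v = z *s v" by blast
    then have "eigenvector (mat_of_cart C) (vec_of_cart v) z"
      unfolding eigenvector_def dim_mat_of_cart using eq nz by simp
    then show "eigenvalue (mat_of_cart C) z"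
      unfolding eigenvalue_def by blast
  qed
qed

definition complexify :: "real^'n^'m \<Rightarrow> complex^'n^'m" where
  "complexify A = (\<chi> i j. complex_of_real (A $ i $ j))"

lemma complexify_mult: "complexify (A ** B) = complexify A ** complexify B"
  by (simp add: complexify_def matrix_matrix_mult_def Finite_Cartesian_Product.vec_eq_iff)

lemma complexify_one: "complexify (Finite_Cartesian_Product.mat 1) = Finite_Cartesian_Product.mat 1"
  by (simp add: complexify_def Finite_Cartesian_Product.mat_def Finite_Cartesian_Product.vec_eq_iff)

lemma complexify_scaleR_mult_vec:
  "complexify (c *\<^sub>R A) *v v = complex_of_real c *s (complexify A *v v)"
  by (simp add: complexify_def matrix_vector_mult_def Finite_Cartesian_Product.vec_eq_iff
      sum_distrib_left mult.assoc)

lemma det_eq_0_iff_ker: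
  fixes C :: "'a::field^'n^'n"
  shows "det C = 0 \<longleftrightarrow> (\<exists>v. v \<noteq> 0 \<and> C *v v = 0)"
  using invertible_det_nz[of C] invertible_left_inverse[of C] matrix_left_invertible_ker[of C]
  by metis

lemma mat_eigenvalues_iff:
  "z \<in> mat_eigenvalues A \<longleftrightarrow> (\<exists>v. v \<noteq> 0 \<and> complexify A *v v = z *s v)"
proof -
  have "Finite_Cartesian_Product.mat z *v v = z *s v" for v :: "complex^'n"
    by (simp add: Finite_Cartesian_Product.mat_def matrix_vector_mult_def
        Finite_Cartesian_Product.vec_eq_iff if_distrib[of "\<lambda>x. x * _"] cong: if_cong)
  then have "(complexify A - Finite_Cartesian_Product.mat z) *v v = complexify A *v v - z *s v" for v
    by (simp add: matrix_vector_mult_diff_rdistrib)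
  then show ?thesis
    by (simp add: mat_eigenvalues_def det_eq_0_iff_ker Finite_Cartesian_Product.mat_def
        flip: complexify_def)
qed

lemma mat_eigenvalues_eq_spectrum:
  "mat_eigenvalues A = Spectral_Radius.spectrum (mat_of_cart (complexify A))"
  by (auto simp: Spectral_Radius.spectrum_def eigenvalue_mat_of_cart_iff mat_eigenvalues_iff)

lemma spectrum_mat_of_cart:
  fixes C :: "complex^'n^'n"
  shows "finite (Spectral_Radius.spectrum (mat_of_cart C))"
    and "Spectral_Radius.spectrum (mat_of_cart C) \<noteq> {}"
  using card_finite_spectrum(1) spectrum_non_empty mat_of_cart_carrier zero_less_card_finite
  by blast+

lemma mat_spectral_radius_eq_spectral_radius:
  "mat_spectral_radius A = spectral_radius (mat_of_cart (complexify A))"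
  using spectrum_mat_of_cart[of "complexify A"]
  by (simp add: mat_spectral_radius_def spectral_radius_def mat_eigenvalues_eq_spectrum cSup_eq_Max)

lemma mat_spectral_radius_less_iff:
  "mat_spectral_radius A < t \<longleftrightarrow> (\<forall>z\<in>mat_eigenvalues A. cmod z < t)"
  using spectrum_mat_of_cart[of "complexify A"]
  by (simp add: mat_spectral_radius_def mat_eigenvalues_eq_spectrum cSup_eq_Max)

lemma scaleR_mem_mat_eigenvalues:
  "z \<in> mat_eigenvalues A \<Longrightarrow> complex_of_real c * z \<in> mat_eigenvalues (c *\<^sub>R A)"
  by (auto simp: mat_eigenvalues_iff complexify_scaleR_mult_vec)

lemma linear_funpow: "linear (L :: 'a::real_vector \<Rightarrow> 'a) \<Longrightarrow> linear (L ^^ k)"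
  by (induction k) (auto simp: linear_compose linear_id id_def[symmetric])

lemma mat_of_cart_complexify_funpow:
  fixes L :: "real^'n \<Rightarrow> real^'n"
  assumes "linear L"
  shows "mat_of_cart (complexify (matrix (L ^^ k))) = mat_of_cart (complexify (matrix L)) ^\<^sub>m k"
proof (induction k)
  case 0
  then show ?case
    by (simp add: matrix_id_mat_1[unfolded id_def] complexify_one mat_of_cart_one dim_mat_of_cart)
next
  case (Suc k)
  have "matrix (L ^^ Suc k) = matrix (L ^^ k) ** matrix L"
    unfolding funpow_Suc_right by (rule matrix_compose[OF assms linear_funpow[OF assms]])
  then show ?case
    by (simp only: complexify_mult mat_of_cart_mult Suc.IH pow_mat.simps(2))
qed

lemma bounded_funpow_if_mat_spectral_radius_less_1:
  fixes L :: "real^'n \<Rightarrow> real^'n"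
  assumes L: "linear L" and "mat_spectral_radius (matrix L) < 1"
  obtains c where "\<And>k v. norm ((L ^^ k) v) \<le> c * norm v"
proof -
  let ?M = "mat_of_cart (complexify (matrix L))"
  have "spectral_radius ?M < 1"
    using assms(2) by (simp add: mat_spectral_radius_eq_spectral_radius)
  then obtain c where c: "\<And>k. norm_bound (?M ^\<^sub>m k) c"
    using spectral_radius_jnf_norm_bound_less_1_upper_triangular[OF mat_of_cart_carrier] by blast
  have entries: "\<bar>matrix (L ^^ k) $ a $ b\<bar> \<le> c" for k a b
  proof -
    obtain i j where ij: "i < CARD('n)" "j < CARD('n)" "cart_index i = a" "cart_index j = b"
      using cart_index_surj by metis
    moreover have "?M ^\<^sub>m k \<in> carrier_mat CARD('n) CARD('n)" by simp
    ultimately have "norm ((?M ^\<^sub>m k) $$ (i, j)) \<le> c"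
      using c[of k] unfolding norm_bound_def by (metis carrier_matD)
    then show ?thesis
      using ij by (simp add: flip: mat_of_cart_complexify_funpow[OF L])
        (simp add: mat_of_cart_def complexify_def)
  qed
  have "norm ((L ^^ k) v) \<le> (real CARD('n) * real CARD('n) * c) * norm v" for k v
  proof -
    have "norm ((L ^^ k) v) = norm (matrix (L ^^ k) *v v)"
      using linear_funpow[OF L] by simp
    also have "\<dots> \<le> onorm ((*v) (matrix (L ^^ k))) * norm v"
      by (rule onorm) (simp add: linear_conv_bounded_linear)
    also have "\<dots> \<le> (real CARD('n) * real CARD('n) * c) * norm v"
      by (rule mult_right_mono[OF onorm_le_matrix_component[OF entries]]) simp
    finally show ?thesis .
  qed
  then show ?thesis by (rule that)
qed

lemma funpow_scaleR:
  fixes L :: "'a::real_vector \<Rightarrow> 'a"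
  assumes "linear L"
  shows "((\<lambda>v. c *\<^sub>R L v) ^^ k) v = c ^ k *\<^sub>R (L ^^ k) v"
  by (induction k) (simp_all add: linear.scaleR[OF assms])

lemma power_contraction_if_mat_spectral_radius_less_1:
  fixes L :: "real^'n \<Rightarrow> real^'n"
  assumes L: "linear L" and \<rho>: "mat_spectral_radius (matrix L) < 1" and "q > 0"
  obtains N where "N > 0" "\<And>v. norm ((L ^^ N) v) \<le> q * norm v"
proof -
  define s where "s = (1 + max (mat_spectral_radius (matrix L)) 0) / 2"
  have s: "0 < s" "s < 1" "mat_spectral_radius (matrix L) < s"
    using \<rho> by (auto simp: s_def)
  \<comment> \<open>The Jordan normal form only bounds the powers of \<open>L / s\<close>; this gives decay like \<open>s\<^sup>k\<close>.\<close>
  define L' where "L' v = (1 / s) *\<^sub>R L v" for v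
  have L': "linear L'"
    unfolding L'_def by (intro linear_compose_scale_right L)
  have "mat_spectral_radius (matrix L') < 1"
    unfolding mat_spectral_radius_less_iff
  proof
    fix z assume "z \<in> mat_eigenvalues (matrix L')"
    moreover have "matrix L' = (1 / s) *\<^sub>R matrix L"
      by (simp add: L'_def matrix_def Finite_Cartesian_Product.vec_eq_iff)
    ultimately have "complex_of_real s * z \<in> mat_eigenvalues (matrix L)"
      using scaleR_mem_mat_eigenvalues[of z "(1 / s) *\<^sub>R matrix L" s] s(1) by simp
    then have "cmod (complex_of_real s * z) < s"
      using s(3) by (simp add: mat_spectral_radius_less_iff)
    then have "s * cmod z < s"
      using s(1) by (simp add: norm_mult)
    then show "cmod z < 1" using s(1) by simp
  qed
  then obtain c where c: "\<And>k v. norm ((L' ^^ k) v) \<le> c * norm v"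
    using bounded_funpow_if_mat_spectral_radius_less_1[OF L'] by blast
  have bound: "norm ((L ^^ k) v) \<le> c * s ^ k * norm v" for k v
    using c[of k v] s(1) unfolding L'_def funpow_scaleR[OF L]
    by (simp add: power_one_over field_simps)
  have "(\<lambda>k. c * s ^ k) \<longlonglongrightarrow> c * 0"
    using s by (intro tendsto_intros) simp
  then have "eventually (\<lambda>k. c * s ^ k < q) sequentially"
    using \<open>q > 0\<close> by (intro order_tendstoD(2)) auto
  then obtain N where N: "\<And>k. k \<ge> N \<Longrightarrow> c * s ^ k < q"
    unfolding eventually_sequentially by blast
  show ?thesis
  proof (rule that[of "Suc N"])
    show "norm ((L ^^ Suc N) v) \<le> q * norm v" for v
    proof -
      have "c * s ^ Suc N * norm v \<le> q * norm v"
        using N[of "Suc N"] by (intro mult_right_mono) auto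
      then show ?thesis using bound[of "Suc N" v] by linarith
    qed
  qed simp
qed

section \<open>Uniform linearisation of a \<open>C\<^sup>1\<close> map\<close>

lemma linearization_error_bound:
  fixes g :: "'a::real_normed_vector \<Rightarrow> 'b::real_normed_vector"
  assumes "convex S" and L: "bounded_linear L"
    and g: "\<And>u. u \<in> S \<Longrightarrow> (g has_derivative g' u) (at u within S)"
    and g'_close: "\<And>u v. u \<in> S \<Longrightarrow> norm (g' u v - L v) \<le> \<epsilon> * norm v" and "\<epsilon> \<ge> 0"
    and "u1 \<in> S" "u2 \<in> S"
  shows "norm (g u1 - g u2 - L (u1 - u2)) \<le> \<epsilon> * norm (u1 - u2)"
proof -
  have "norm ((g u1 - L u1) - (g u2 - L u2)) \<le> \<epsilon> * norm (u1 - u2)"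
  proof (rule differentiable_bound[where f' = "\<lambda>u v. g' u v - L v"])
    show "((\<lambda>u. g u - L u) has_derivative (\<lambda>v. g' u v - L v)) (at u within S)" if "u \<in> S" for u
      using has_derivative_diff[OF g[OF that] bounded_linear_imp_has_derivative[OF L]] .
    show "onorm (\<lambda>v. g' u v - L v) \<le> \<epsilon>" if "u \<in> S" for u
      by (rule onorm_bound) (use g'_close[OF that] \<open>\<epsilon> \<ge> 0\<close> in auto)
  qed fact+
  then show ?thesis by (simp add: linear_diff[OF bounded_linear.linear[OF L]] algebra_simps)
qed

lemma bounded_linear_blinfun_apply_Pair_zero: "bounded_linear (\<lambda>v. blinfun_apply B (v, 0))"
  by (intro bounded_linear_compose[OF blinfun.bounded_linear_right] bounded_linear_Pair
      bounded_linear_ident bounded_linear_zero)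

lemma C1_with_partial_derivative:
  assumes "C1_with (\<lambda>(u, p). f u p) Df"
  shows "((\<lambda>u. f u p) has_derivative (\<lambda>v. Df (u, p) (v, 0))) (at u)"
proof -
  have "((\<lambda>u. (u, p)) has_derivative (\<lambda>v. (v, 0))) (at u)"
    by (intro has_derivative_Pair has_derivative_ident has_derivative_const)
  moreover have "((\<lambda>(u, p). f u p) has_derivative Df (u, p)) (at (u, p))"
    using assms by (simp add: C1_with_def)
  ultimately show ?thesis
    using has_derivative_compose by fastforce
qed

lemma C1_with_continuous_on:
  assumes "C1_with (\<lambda>(u, p). f u p) Df"
  shows "continuous_on UNIV (\<lambda>u. f u p)"
  using C1_with_partial_derivative[OF assms] has_derivative_continuous
  by (blast intro: continuous_at_imp_continuous_on)

definition uniformly_strictly_differentiable ::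
  "('a::real_normed_vector \<Rightarrow> 'p::metric_space \<Rightarrow> 'b::real_normed_vector) \<Rightarrow> ('a \<Rightarrow> 'b) \<Rightarrow> 'a \<Rightarrow> 'p \<Rightarrow> bool"
  where "uniformly_strictly_differentiable f L x0 p0 \<longleftrightarrow>
    (\<forall>\<epsilon>>0. \<exists>\<delta>>0. \<forall>u1\<in>ball x0 \<delta>. \<forall>u2\<in>ball x0 \<delta>. \<forall>p\<in>ball p0 \<delta>.
       norm (f u1 p - f u2 p - L (u1 - u2)) \<le> \<epsilon> * norm (u1 - u2))"

lemma C1_with_uniformly_strictly_differentiable:
  assumes C1: "C1_with (\<lambda>(u, p). f u p) Df"
  shows "uniformly_strictly_differentiable f (\<lambda>v. Df (x0, p0) (v, 0)) x0 p0"
  unfolding uniformly_strictly_differentiable_def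
proof (intro allI impI)
  fix \<epsilon> :: real assume "\<epsilon> > 0"
  moreover have "isCont Df (x0, p0)"
    using C1 by (simp add: C1_with_def continuous_on_eq_continuous_at)
  ultimately obtain d where d: "d > 0" "\<And>z. dist z (x0, p0) < d \<Longrightarrow> dist (Df z) (Df (x0, p0)) < \<epsilon>"
    unfolding continuous_at_eps_delta by blast
  have close: "norm (Df (u, p) (v, 0) - Df (x0, p0) (v, 0)) \<le> \<epsilon> * norm v"
    if "u \<in> ball x0 (d / 2)" "p \<in> ball p0 (d / 2)" for u p v
  proof -
    have "dist (u, p) (x0, p0) \<le> norm (u - x0) + norm (p - p0)"
      using norm_Pair_le[of "u - x0" "p - p0"] by (simp add: dist_norm)
    also have "\<dots> < d"
      using that by (simp add: dist_norm norm_minus_commute)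
    finally have "norm (Df (u, p) - Df (x0, p0)) \<le> \<epsilon>"
      using d(2) by (simp add: dist_norm less_imp_le)
    then have "norm (Df (u, p) - Df (x0, p0)) * norm (v, 0) \<le> \<epsilon> * norm v"
      by (simp add: mult_right_mono)
    then show ?thesis
      using norm_blinfun[of "Df (u, p) - Df (x0, p0)" "(v, 0)"] by (simp add: blinfun.diff_left)
  qed
  show "\<exists>\<delta>>0. \<forall>u1\<in>ball x0 \<delta>. \<forall>u2\<in>ball x0 \<delta>. \<forall>p\<in>ball p0 \<delta>.
      norm (f u1 p - f u2 p - Df (x0, p0) (u1 - u2, 0)) \<le> \<epsilon> * norm (u1 - u2)"
  proof (intro exI[of _ "d / 2"] conjI ballI)
    fix u1 u2 p assume "u1 \<in> ball x0 (d / 2)" "u2 \<in> ball x0 (d / 2)" and p: "p \<in> ball p0 (d / 2)"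
    then show "norm (f u1 p - f u2 p - Df (x0, p0) (u1 - u2, 0)) \<le> \<epsilon> * norm (u1 - u2)"
      using \<open>\<epsilon> > 0\<close>
      by (intro linearization_error_bound[OF convex_ball[of x0 "d / 2"]
          bounded_linear_blinfun_apply_Pair_zero
          has_derivative_at_withinI[OF C1_with_partial_derivative[OF C1]] close[OF _ p]]) auto
  qed (use d in simp)
qed

section \<open>Orbits of the non-autonomous system\<close>

lemma orbit_add:
  "orbit f \<Lambda> r n0 y (j + k) = orbit f \<Lambda> r (n0 + int j) (orbit f \<Lambda> r n0 y j) k"
  by (induction k) (simp_all add: add.assoc)

lemma orbit_solution:
  assumes "\<forall>n. x (n + 1) = f (x n) (\<Lambda> (r * real_of_int n))"
  shows "orbit f \<Lambda> r n (x n) k = x (n + int k)"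
proof (induction k)
  case 0
  then show ?case by simp
next
  case (Suc k)
  have "x (n + int (Suc k)) = x ((n + int k) + 1)" by (simp add: ac_simps)
  also have "\<dots> = f (x (n + int k)) (\<Lambda> (r * real_of_int (n + int k)))"
    using assms by blast
  finally show ?case using Suc by simp
qed

lemma continuous_on_orbit:
  assumes "\<And>p. continuous_on UNIV (\<lambda>u. f u p)"
  shows "continuous_on UNIV (\<lambda>y. orbit f \<Lambda> r n0 y k)"
  by (induction k) (simp_all add: continuous_on_id continuous_on_compose2[OF assms])

lemma phi_trans:
  assumes "n0 \<le> T" "T \<le> n1"
  shows "phi f \<Lambda> r n1 n0 y = phi f \<Lambda> r n1 T (phi f \<Lambda> r T n0 y)"
proof -
  have "nat (n1 - n0) = nat (T - n0) + nat (n1 - T)" using assms by simp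
  then show ?thesis
    unfolding phi_def using assms by (simp add: orbit_add)
qed

lemma phi_solution:
  assumes "\<forall>n. x (n + 1) = f (x n) (\<Lambda> (r * real_of_int n))" "n0 \<le> n1"
  shows "phi f \<Lambda> r n1 n0 (x n0) = x n1"
  using orbit_solution[of x f \<Lambda> r, OF assms(1)] assms(2) by (simp add: phi_def)

lemma tendsto_phi_forward:
  fixes f :: "'a::t2_space \<Rightarrow> 'p \<Rightarrow> 'a"
  assumes cont: "\<And>p. continuous_on UNIV (\<lambda>u. f u p)"
    and sol: "\<forall>n. x (n + 1) = f (x n) (\<Lambda> (r * real_of_int n))"
    and lim: "((\<lambda>n0. phi f \<Lambda> r T n0 y) \<longlongrightarrow> x T) at_bot" and "T \<le> n1"
  shows "((\<lambda>n0. phi f \<Lambda> r n1 n0 y) \<longlongrightarrow> x n1) at_bot"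
proof -
  have "continuous_on UNIV (phi f \<Lambda> r n1 T)"
    unfolding phi_def[abs_def] by (rule continuous_on_orbit[where f = f, OF cont])
  then have "isCont (phi f \<Lambda> r n1 T) (x T)"
    by (simp add: continuous_on_eq_continuous_at)
  then have "((\<lambda>n0. phi f \<Lambda> r n1 T (phi f \<Lambda> r T n0 y)) \<longlongrightarrow> x n1) at_bot"
    using isCont_tendsto_compose[OF _ lim] phi_solution[of x f \<Lambda> r, OF sol \<open>T \<le> n1\<close>] by metis
  moreover have "eventually (\<lambda>n0. phi f \<Lambda> r n1 T (phi f \<Lambda> r T n0 y) = phi f \<Lambda> r n1 n0 y) at_bot"
    by (rule eventually_at_bot_linorderI[of T], rule phi_trans[symmetric, OF _ \<open>T \<le> n1\<close>])
  ultimately show ?thesis by (rule Lim_transform_eventually)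
qed

lemma tendsto_comp_scaled_int_at_bot:
  assumes "(g \<longlongrightarrow> l) at_bot" "r > 0"
  shows "((\<lambda>n::int. g (r * real_of_int n)) \<longlongrightarrow> l) at_bot"
proof -
  have "filterlim (\<lambda>n::int. r * real_of_int n) at_bot at_bot"
  proof (subst filterlim_at_bot, intro allI)
    fix Z
    show "eventually (\<lambda>n::int. r * real_of_int n \<le> Z) at_bot"
    proof (rule eventually_at_bot_linorderI[of "\<lfloor>Z / r\<rfloor>"])
      fix n :: int assume "n \<le> \<lfloor>Z / r\<rfloor>"
      then have "real_of_int n \<le> Z / r" by linarith
      then show "r * real_of_int n \<le> Z" using assms(2) by (simp add: field_simps)
    qed
  qed
  with assms(1) show ?thesis by (rule filterlim_compose)
qed

lemma filterlim_nat_diff_div_at_bot: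
  assumes "N > 0"
  shows "filterlim (\<lambda>n::int. nat (T - n) div N) at_top at_bot"
proof (subst filterlim_at_top, intro allI)
  fix Z
  show "eventually (\<lambda>n. Z \<le> nat (T - n) div N) at_bot"
  proof (rule eventually_at_bot_linorderI[of "T - int (Z * N)"])
    fix n assume "n \<le> T - int (Z * N)"
    then have "Z * N \<le> nat (T - n)" by linarith
    then have "Z * N div N \<le> nat (T - n) div N"
      by (rule div_le_mono)
    then show "Z \<le> nat (T - n) div N"
      using assms by simp
  qed
qed

section \<open>Local attraction by a contracting linearisation\<close>

text \<open>
  After \<open>N\<close> perturbed steps the error deviates from its image under \<open>L\<^sup>N\<close> by at most
  \<open>N \<epsilon> (a + 1)\<^sup>N\<close> times its initial size, so \<open>\<epsilon>_small\<close> together with \<open>power_contracts\<close>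
  halves the error over every block of \<open>N\<close> steps.
\<close>

locale contracting_linearization =
  fixes L :: "'a::real_normed_vector \<Rightarrow> 'a" and a :: real and N :: nat and \<epsilon> :: real
  assumes linear: "linear L"
    and norm_le: "\<And>v. norm (L v) \<le> a * norm v" and a_nonneg: "a \<ge> 0"
    and N_pos: "N > 0" and power_contracts: "\<And>v. norm ((L ^^ N) v) \<le> 1/4 * norm v"
    and \<epsilon>_nonneg: "\<epsilon> \<ge> 0" and \<epsilon>_small: "real N * \<epsilon> * (a + 1) ^ N \<le> 1/4"
begin

lemma \<epsilon>_le_1: "\<epsilon> \<le> 1"
proof -
  have "1 * \<epsilon> * 1 \<le> real N * \<epsilon> * (a + 1) ^ N"
    using N_pos \<epsilon>_nonneg a_nonneg by (intro mult_mono) auto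
  then show ?thesis using \<epsilon>_small by simp
qed

lemma perturbed_iterates:
  fixes e :: "nat \<Rightarrow> 'a"
  assumes step: "\<And>i. i < m \<Longrightarrow> norm (e i) \<le> K \<Longrightarrow> norm (e (Suc i) - L (e i)) \<le> \<epsilon> * norm (e i)"
    and e0: "(a + 1) ^ m * norm (e 0) \<le> K"
  shows "i \<le> m \<Longrightarrow> norm (e i) \<le> (a + 1) ^ i * norm (e 0) \<and>
      norm (e i - (L ^^ i) (e 0)) \<le> real i * \<epsilon> * (a + 1) ^ i * norm (e 0)"
proof (induction i)
  case 0
  then show ?case by simp
next
  case (Suc i)
  define P where "P = (a + 1) ^ i * norm (e 0)"
  have i: "i < m" using Suc.prems by simp
  have IH: "norm (e i) \<le> P" "norm (e i - (L ^^ i) (e 0)) \<le> real i * \<epsilon> * P"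
    using Suc.IH[OF less_imp_le[OF i]] by (simp_all add: P_def mult.assoc)
  have "P \<le> (a + 1) ^ m * norm (e 0)"
    unfolding P_def using i a_nonneg by (intro mult_right_mono power_increasing) auto
  then have "norm (e i) \<le> K" using IH(1) e0 by linarith
  then have r: "norm (e (Suc i) - L (e i)) \<le> \<epsilon> * norm (e i)" using step i by blast
  have "norm (e (Suc i)) \<le> norm (L (e i)) + norm (e (Suc i) - L (e i))"
    using norm_triangle_ineq[of "L (e i)" "e (Suc i) - L (e i)"] by simp
  also have "\<dots> \<le> (a + 1) * norm (e i)"
    using norm_le[of "e i"] r mult_right_mono[OF \<epsilon>_le_1 norm_ge_zero[of "e i"]]
    by (simp add: algebra_simps)
  also have "\<dots> \<le> (a + 1) * P" using IH(1) a_nonneg by (simp add: mult_left_mono)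
  finally have bound: "norm (e (Suc i)) \<le> (a + 1) ^ Suc i * norm (e 0)" by (simp add: P_def)
  have "e (Suc i) - (L ^^ Suc i) (e 0) = (e (Suc i) - L (e i)) + L (e i - (L ^^ i) (e 0))"
    using linear_diff[OF linear] by simp
  then have "norm (e (Suc i) - (L ^^ Suc i) (e 0))
      \<le> norm (e (Suc i) - L (e i)) + norm (L (e i - (L ^^ i) (e 0)))"
    by (simp only: norm_triangle_ineq)
  also have "\<dots> \<le> \<epsilon> * norm (e i) + a * (real i * \<epsilon> * P)"
    using r norm_le[of "e i - (L ^^ i) (e 0)"] mult_left_mono[OF IH(2) a_nonneg] by linarith
  also have "\<dots> \<le> (1 + a * real i) * (\<epsilon> * P)"
    using mult_left_mono[OF IH(1) \<epsilon>_nonneg] by (simp add: algebra_simps)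
  also have "\<dots> \<le> ((real i + 1) * (a + 1)) * (\<epsilon> * P)"
  proof (rule mult_right_mono)
    show "1 + a * real i \<le> (real i + 1) * (a + 1)" using a_nonneg by (simp add: algebra_simps)
    show "0 \<le> \<epsilon> * P" using \<epsilon>_nonneg a_nonneg by (simp add: P_def)
  qed
  finally show ?case using bound by (simp add: P_def algebra_simps)
qed

lemma perturbed_iterates_halve:
  fixes e :: "nat \<Rightarrow> 'a"
  assumes step: "\<And>i. i < N \<Longrightarrow> norm (e i) \<le> K \<Longrightarrow> norm (e (Suc i) - L (e i)) \<le> \<epsilon> * norm (e i)"
    and e0: "(a + 1) ^ N * norm (e 0) \<le> K"
  shows "norm (e N) \<le> 1/2 * norm (e 0)"
proof -
  have "norm (e N - (L ^^ N) (e 0)) \<le> real N * \<epsilon> * (a + 1) ^ N * norm (e 0)"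
    using perturbed_iterates[OF step e0] by blast
  also have "\<dots> \<le> 1/4 * norm (e 0)"
    by (rule mult_right_mono[OF \<epsilon>_small norm_ge_zero])
  finally have "norm (e N - (L ^^ N) (e 0)) \<le> 1/4 * norm (e 0)" .
  then show ?thesis
    using power_contracts[of "e 0"] norm_triangle_ineq[of "(L ^^ N) (e 0)" "e N - (L ^^ N) (e 0)"]
    by simp
qed

lemma perturbed_iterates_blocks:
  fixes e :: "nat \<Rightarrow> 'a"
  assumes step: "\<And>i. i < m \<Longrightarrow> norm (e i) \<le> K \<Longrightarrow> norm (e (Suc i) - L (e i)) \<le> \<epsilon> * norm (e i)"
    and e0: "(a + 1) ^ N * norm (e 0) \<le> K"
  shows "k * N \<le> m \<Longrightarrow> norm (e (k * N)) \<le> (1/2) ^ k * norm (e 0)"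
proof (induction k)
  case 0
  then show ?case by simp
next
  case (Suc k)
  have IH: "norm (e (k * N)) \<le> (1/2) ^ k * norm (e 0)"
    using Suc by simp
  also have "\<dots> \<le> norm (e 0)"
    by (simp add: mult_left_le_one_le power_le_one)
  finally have "(a + 1) ^ N * norm (e (k * N + 0)) \<le> (a + 1) ^ N * norm (e 0)"
    using a_nonneg by (intro mult_left_mono) auto
  then have "(a + 1) ^ N * norm (e (k * N + 0)) \<le> K"
    using e0 by linarith
  moreover have "norm (e (k * N + Suc i) - L (e (k * N + i))) \<le> \<epsilon> * norm (e (k * N + i))"
    if "i < N" "norm (e (k * N + i)) \<le> K" for i
    using step that Suc.prems by simp
  ultimately have "norm (e (k * N + N)) \<le> 1/2 * norm (e (k * N))"
    using perturbed_iterates_halve[of "\<lambda>i. e (k * N + i)" K] by simp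
  then show ?case using IH by (simp add: add.commute)
qed

lemma perturbed_iterates_decay:
  fixes e :: "nat \<Rightarrow> 'a"
  assumes step: "\<And>i. i < m \<Longrightarrow> norm (e i) \<le> K \<Longrightarrow> norm (e (Suc i) - L (e i)) \<le> \<epsilon> * norm (e i)"
    and e0: "(a + 1) ^ N * norm (e 0) \<le> K"
    and j: "j \<le> m"
  shows "norm (e j) \<le> (a + 1) ^ N * (1/2) ^ (j div N) * norm (e 0)"
proof -
  define k i where "k = j div N" and "i = j mod N"
  have ji: "j = k * N + i" and "i \<le> N"
    using N_pos by (simp_all add: k_def i_def less_imp_le)
  have kN: "norm (e (k * N)) \<le> (1/2) ^ k * norm (e 0)"
    using perturbed_iterates_blocks[OF step e0] j ji by simp
  also have "\<dots> \<le> norm (e 0)"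
    by (simp add: mult_left_le_one_le power_le_one)
  finally have "(a + 1) ^ i * norm (e (k * N + 0)) \<le> (a + 1) ^ N * norm (e 0)"
    using \<open>i \<le> N\<close> a_nonneg by (intro mult_mono power_increasing) auto
  then have "(a + 1) ^ i * norm (e (k * N + 0)) \<le> K"
    using e0 by linarith
  moreover have "norm (e (k * N + Suc i') - L (e (k * N + i'))) \<le> \<epsilon> * norm (e (k * N + i'))"
    if "i' < i" "norm (e (k * N + i')) \<le> K" for i'
    using step that j ji by simp
  ultimately have "norm (e j) \<le> (a + 1) ^ i * norm (e (k * N))"
    using perturbed_iterates[of i "\<lambda>i'. e (k * N + i')" K] ji by simp
  also have "\<dots> \<le> (a + 1) ^ N * ((1/2) ^ k * norm (e 0))"
    using kN a_nonneg \<open>i \<le> N\<close> by (intro mult_mono power_increasing) auto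
  finally show ?thesis by (simp add: k_def mult.assoc)
qed

lemma orbit_error_decay:
  fixes f :: "'a \<Rightarrow> 'p::metric_space \<Rightarrow> 'a" and x :: "int \<Rightarrow> 'a"
  assumes lin: "\<forall>u1\<in>ball x0 \<delta>. \<forall>u2\<in>ball x0 \<delta>. \<forall>p\<in>ball p0 \<delta>.
      norm (f u1 p - f u2 p - L (u1 - u2)) \<le> \<epsilon> * norm (u1 - u2)"
    and sol: "\<forall>n. x (n + 1) = f (x n) (\<Lambda> (r * real_of_int n))"
    and near: "\<forall>n\<le>M. x n \<in> ball x0 \<eta> \<and> \<Lambda> (r * real_of_int n) \<in> ball p0 \<delta>"
    and \<eta>: "(a + 1) ^ N * (2 * \<eta>) \<le> \<delta> / 2"
    and y: "y \<in> ball x0 \<eta>" and T: "n0 \<le> T" "T \<le> M"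
  shows "norm (phi f \<Lambda> r T n0 y - x T) \<le> (a + 1) ^ N * (1/2) ^ (nat (T - n0) div N) * (2 * \<eta>)"
proof -
  define e where "e j = orbit f \<Lambda> r n0 y j - x (n0 + int j)" for j
  have "dist y (x n0) \<le> dist y x0 + dist (x n0) x0" by (rule dist_triangle2)
  then have e0: "norm (e 0) \<le> 2 * \<eta>"
    using y near[rule_format, of n0] T by (simp add: e_def dist_norm norm_minus_commute)
  have "0 \<le> \<eta>" using y zero_le_dist[of x0 y] by (simp only: mem_ball)
  then have "1 * \<eta> \<le> (a + 1) ^ N * (2 * \<eta>)"
    using a_nonneg by (intro mult_mono) auto
  then have \<eta>\<delta>: "\<eta> \<le> \<delta> / 2" using \<eta> by simp
  have step: "norm (e (Suc j) - L (e j)) \<le> \<epsilon> * norm (e j)"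
    if "j < nat (M - n0)" "norm (e j) \<le> \<delta> / 2" for j
  proof -
    let ?u = "orbit f \<Lambda> r n0 y j" and ?n = "n0 + int j"
    have near_n: "x ?n \<in> ball x0 \<eta>" "\<Lambda> (r * real_of_int ?n) \<in> ball p0 \<delta>"
      using near[rule_format, of ?n] that(1) by auto
    have "dist x0 ?u \<le> dist x0 (x ?n) + norm (e j)"
      using dist_triangle[of x0 ?u "x ?n"] by (simp add: e_def dist_norm norm_minus_commute)
    then have "?u \<in> ball x0 \<delta>" using near_n(1) that(2) \<eta>\<delta> by simp
    moreover have "x ?n \<in> ball x0 \<delta>" using near_n(1) \<eta>\<delta> \<open>0 \<le> \<eta>\<close> by simp
    moreover have "x (n0 + int (Suc j)) = f (x ?n) (\<Lambda> (r * real_of_int ?n))"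
      using sol[rule_format, of ?n] by (simp add: ac_simps)
    ultimately show ?thesis
      using lin near_n(2) by (simp add: e_def)
  qed
  have "(a + 1) ^ N * norm (e 0) \<le> (a + 1) ^ N * (2 * \<eta>)"
    using e0 a_nonneg by (intro mult_left_mono) auto
  then have "norm (e (nat (T - n0))) \<le> (a + 1) ^ N * (1/2) ^ (nat (T - n0) div N) * norm (e 0)"
    using \<eta> T by (intro perturbed_iterates_decay[where e = e, OF step]) auto
  also have "\<dots> \<le> (a + 1) ^ N * (1/2) ^ (nat (T - n0) div N) * (2 * \<eta>)"
    using e0 a_nonneg by (intro mult_left_mono) auto
  finally show ?thesis using T by (simp add: e_def phi_def)
qed

lemma orbit_tendsto_solution:
  fixes f :: "'a \<Rightarrow> 'p::metric_space \<Rightarrow> 'a" and x :: "int \<Rightarrow> 'a"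
  assumes lin: "\<forall>u1\<in>ball x0 \<delta>. \<forall>u2\<in>ball x0 \<delta>. \<forall>p\<in>ball p0 \<delta>.
      norm (f u1 p - f u2 p - L (u1 - u2)) \<le> \<epsilon> * norm (u1 - u2)"
    and sol: "\<forall>n. x (n + 1) = f (x n) (\<Lambda> (r * real_of_int n))"
    and near: "\<forall>n\<le>M. x n \<in> ball x0 \<eta> \<and> \<Lambda> (r * real_of_int n) \<in> ball p0 \<delta>"
    and \<eta>: "(a + 1) ^ N * (2 * \<eta>) \<le> \<delta> / 2"
    and y: "y \<in> ball x0 \<eta>" and "T \<le> M"
  shows "((\<lambda>n0. phi f \<Lambda> r T n0 y) \<longlongrightarrow> x T) at_bot"
proof -
  let ?bound = "\<lambda>n0. (a + 1) ^ N * (1/2) ^ (nat (T - n0) div N) * (2 * \<eta>)"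
  have "((\<lambda>n0. (1/2::real) ^ (nat (T - n0) div N)) \<longlongrightarrow> 0) at_bot"
    by (rule filterlim_compose[OF LIMSEQ_realpow_zero filterlim_nat_diff_div_at_bot[OF N_pos]])
      simp_all
  then have "(?bound \<longlongrightarrow> 0) at_bot"
    by (intro tendsto_mult_left_zero tendsto_mult_right_zero)
  moreover have "eventually (\<lambda>n0. norm (phi f \<Lambda> r T n0 y - x T) \<le> ?bound n0) at_bot"
    using orbit_error_decay[OF lin sol near \<eta> y _ \<open>T \<le> M\<close>]
    by (intro eventually_at_bot_linorderI[of T])
  ultimately have "((\<lambda>n0. phi f \<Lambda> r T n0 y - x T) \<longlongrightarrow> 0) at_bot"
    by (rule Lim_null_comparison[rotated])
  then show ?thesis by (rule LIM_zero_cancel)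
qed

end

lemma solution_attracts_nearby_orbits:
  fixes f :: "'a::real_normed_vector \<Rightarrow> 'p::metric_space \<Rightarrow> 'a" and x :: "int \<Rightarrow> 'a"
  assumes L: "bounded_linear L" and N: "N > 0" and LN: "\<And>v. norm ((L ^^ N) v) \<le> 1/4 * norm v"
    and deriv: "uniformly_strictly_differentiable f L x0 p0"
    and cont: "\<And>p. continuous_on UNIV (\<lambda>u. f u p)"
    and sol: "\<forall>n. x (n + 1) = f (x n) (\<Lambda> (r * real_of_int n))"
    and x_lim: "(x \<longlongrightarrow> x0) at_bot"
    and \<Lambda>_lim: "((\<lambda>n. \<Lambda> (r * real_of_int n)) \<longlongrightarrow> p0) at_bot"
  shows "\<exists>U. open U \<and> x0 \<in> U \<and>
    (\<forall>y\<in>U. \<forall>n1. ((\<lambda>n0. norm (phi f \<Lambda> r n1 n0 y - x n1)) \<longlongrightarrow> 0) at_bot)"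
proof -
  define a where "a = onorm L"
  define C where "C = (a + 1) ^ N"
  define \<epsilon> where "\<epsilon> = 1 / (4 * real N * C)"
  have "a \<ge> 0" using onorm_pos_le[OF L] by (simp add: a_def)
  then have "C \<ge> 1" by (simp add: C_def)
  have "\<epsilon> > 0" using N \<open>C \<ge> 1\<close> by (simp add: \<epsilon>_def)
  have "contracting_linearization L a N \<epsilon>"
  proof (rule contracting_linearization.intro)
    show "linear L" using L by (rule bounded_linear.linear)
    show "norm (L v) \<le> a * norm v" for v using onorm[OF L] by (simp add: a_def)
    show "real N * \<epsilon> * (a + 1) ^ N \<le> 1/4"
      using N \<open>C \<ge> 1\<close> by (simp add: \<epsilon>_def flip: C_def)
  qed (use N LN \<open>a \<ge> 0\<close> \<open>\<epsilon> > 0\<close> in auto)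
  then interpret contracting_linearization L a N \<epsilon> .
  obtain \<delta> where "\<delta> > 0" and lin: "\<forall>u1\<in>ball x0 \<delta>. \<forall>u2\<in>ball x0 \<delta>. \<forall>p\<in>ball p0 \<delta>.
      norm (f u1 p - f u2 p - L (u1 - u2)) \<le> \<epsilon> * norm (u1 - u2)"
    using deriv[unfolded uniformly_strictly_differentiable_def, rule_format, OF \<open>\<epsilon> > 0\<close>] by blast
  define \<eta> where "\<eta> = \<delta> / (4 * C)"
  have "\<eta> > 0" and \<eta>: "(a + 1) ^ N * (2 * \<eta>) \<le> \<delta> / 2"
    using \<open>\<delta> > 0\<close> \<open>C \<ge> 1\<close> by (simp_all add: \<eta>_def flip: C_def)
  obtain M where "\<And>n. n \<le> M \<Longrightarrow> dist (x n) x0 < \<eta> \<and> dist (\<Lambda> (r * real_of_int n)) p0 < \<delta>"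
    using eventually_conj[OF tendstoD[OF x_lim \<open>\<eta> > 0\<close>] tendstoD[OF \<Lambda>_lim \<open>\<delta> > 0\<close>]]
    unfolding eventually_at_bot_linorder by blast
  then have near: "\<forall>n\<le>M. x n \<in> ball x0 \<eta> \<and> \<Lambda> (r * real_of_int n) \<in> ball p0 \<delta>"
    by (simp add: dist_commute)
  show ?thesis
  proof (intro exI[of _ "ball x0 \<eta>"] conjI ballI allI)
    fix y n1 assume y: "y \<in> ball x0 \<eta>"
    have "min n1 M \<le> M" by simp
    with y have "((\<lambda>n0. phi f \<Lambda> r (min n1 M) n0 y) \<longlongrightarrow> x (min n1 M)) at_bot"
      by (rule orbit_tendsto_solution[OF lin sol near \<eta>])
    then have "((\<lambda>n0. phi f \<Lambda> r n1 n0 y) \<longlongrightarrow> x n1) at_bot"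
      by (rule tendsto_phi_forward[where f = f and \<Lambda> = \<Lambda> and x = x, OF cont sol]) simp
    then show "((\<lambda>n0. norm (phi f \<Lambda> r n1 n0 y - x n1)) \<longlongrightarrow> 0) at_bot"
      by (intro tendsto_norm_zero LIM_zero)
  qed (use \<open>\<eta> > 0\<close> in auto)
qed

theorem mainTheorem2:
  fixes f :: "real^'l \<Rightarrow> real^'m \<Rightarrow> real^'l"
    and Df :: "(real^'l) \<times> (real^'m) \<Rightarrow> ((real^'l) \<times> (real^'m)) \<Rightarrow>\<^sub>L (real^'l)"
    and \<Lambda> :: "real \<Rightarrow> real^'m" and lm lp :: "real^'m"
    and X :: "real \<Rightarrow> real^'l" and Xm Xp :: "real^'l"
    and r :: real and x :: "int \<Rightarrow> real^'l"
  assumes "C1_with (\<lambda>(u, p). f u p) Df"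
    and "parameter_shift \<Lambda> lm lp"
    and "stable_path f Df \<Lambda> lm lp X Xm Xp"
    and "r > 0"
    and "\<forall>n. x (n + 1) = f (x n) (\<Lambda> (r * real_of_int n))"
    and "(x \<longlongrightarrow> Xm) at_bot"
  shows "\<exists>U. open U \<and> Xm \<in> U \<and>
           (\<forall>y\<in>U. \<forall>n1::int. ((\<lambda>n0::int. norm (phi f \<Lambda> r n1 n0 y - x n1)) \<longlongrightarrow> 0) at_bot)"
proof -
  define L where "L = (\<lambda>v. Df (Xm, lm) (v, 0))"
  have L: "bounded_linear L"
    unfolding L_def by (rule bounded_linear_blinfun_apply_Pair_zero)
  have "mat_spectral_radius (matrix L) < 1"
    using assms(3) by (simp add: stable_path_def Dx_mat_def L_def)
  then obtain N where N: "N > 0" "\<And>v. norm ((L ^^ N) v) \<le> 1/4 * norm v"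
    using power_contraction_if_mat_spectral_radius_less_1[OF bounded_linear.linear[OF L], where q = "1/4"]
    by auto
  have "((\<lambda>n. \<Lambda> (r * real_of_int n)) \<longlongrightarrow> lm) at_bot"
    using assms(2,4) by (simp add: parameter_shift_def tendsto_comp_scaled_int_at_bot)
  then show ?thesis
    using solution_attracts_nearby_orbits[OF L N
        C1_with_uniformly_strictly_differentiable[OF assms(1), of Xm lm, folded L_def]
        C1_with_continuous_on[OF assms(1)] assms(5,6)]
    by blast
qed

end
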